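(* Let $n\geq2$ and $1\le k\le n$. Let $\mathcal M_n^{k,k-1}$ (resp. $\mathcal M_n^{k,k+1}$) be the set of monotone permutations $\pi\in S_n$ with $\pi(1)=k$ and $\pi(2)=k-1$ (resp. $\pi(2)=k+1$). For $\pi\in\mathcal M_n^{k,k-1}$ (resp. $\pi\in\mathcal M_n^{k,k+1}$) define $\bar\pi\in S_{n-1}$ by $\bar\pi(1)=k-1$ (resp. $\bar\pi(1)=k$) and, for $i=2,\dots,n-1$, $\bar\pi(i)=\pi(i+1)$ if $\pi(i+1)<k$ and $\bar\pi(i)=\pi(i+1)-1$ if $\pi(i+1)>k$. Then $\pi\mapsto\bar\pi$ is a bijection $\mathcal M_n^{k,k-1}\to\mathcal M_{n-1}^{k-1}$ (resp. $\mathcal M_n^{k,k+1}\to\mathcal M_{n-1}^{k}$), and $(-1)^{\operatorname{dr}(\bar\pi)}=(-1)^{\operatorname{dr}(\pi)+k}$ (resp. $(-1)^{\operatorname{dr}(\bar\pi)}=(-1)^{\operatorname{dr}(\pi)+k-1}$).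
   Context: A permutation $\pi\in S_n$ is monotone if, for each $i=1,\dots,n$, either $\pi(j)<\pi(i)$ for all $j<i$, or $\pi(j)>\pi(i)$ for all $j<i$; in the second case $i$ is called a drop of $\pi$ (by convention $i=1$ satisfies the first condition vacuously and is not a drop). $\mathcal M_n^k$ denotes the set of monotone permutations with $\pi(1)=k$, and $\operatorname{dr}(\pi)$ the sum of all drops of $\pi$. *)

theory Defs
  imports "HOL-Combinatorics.Permutations"
begin

text \<open>Permutations in S_n are functions nat => nat permuting {1..n} (identity outside).\<close>

definition monotone_perm :: "nat \<Rightarrow> (nat \<Rightarrow> nat) \<Rightarrow> bool" where
  "monotone_perm n p \<longleftrightarrow> p permutes {1..n} \<and>
     (\<forall>i\<in>{1..n}. (\<forall>j\<in>{1..<i}. p j < p i) \<or> (\<forall>j\<in>{1..<i}. p j > p i))"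

text \<open>Drops: i >= 2 with p j > p i for all j < i (i = 1 is never a drop).\<close>
definition drops :: "nat \<Rightarrow> (nat \<Rightarrow> nat) \<Rightarrow> nat set" where
  "drops n p = {i\<in>{2..n}. \<forall>j\<in>{1..<i}. p j > p i}"

definition dr :: "nat \<Rightarrow> (nat \<Rightarrow> nat) \<Rightarrow> nat" where
  "dr n p = \<Sum>(drops n p)"

definition Mon :: "nat \<Rightarrow> nat \<Rightarrow> (nat \<Rightarrow> nat) set" where
  "Mon n k = {p. monotone_perm n p \<and> p 1 = k}"

definition Mon2 :: "nat \<Rightarrow> nat \<Rightarrow> nat \<Rightarrow> (nat \<Rightarrow> nat) set" where
  "Mon2 n k l = {p. monotone_perm n p \<and> p 1 = k \<and> p 2 = l}"

text \<open>The map pi |-> bar pi in S_{n-1}, with prescribed first value a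
  (a = k-1 in the first case, a = k in the second); identity outside {1..n-1}.\<close>
definition bar :: "nat \<Rightarrow> nat \<Rightarrow> nat \<Rightarrow> (nat \<Rightarrow> nat) \<Rightarrow> (nat \<Rightarrow> nat)" where
  "bar n k a p = (\<lambda>i. if i = 1 then a
      else if i \<in> {2..n-1} then (if p (i+1) < k then p (i+1) else p (i+1) - 1)
      else i)"

end

(*
  In a monotone permutation every entry after the first lies either above all earlier
  entries or below all of them, and which of the two happens is decided by comparing it
  with p 1 alone.  So the drops of p are exactly the positions carrying a value below p 1,
  and there are p 1 - 1 of them.

  The map bar deletes the first entry k and closes the gap left in the values.  It
  preserves monotonicity, and when p 2 = k +- 1 its inverse (prepend k, reopen the gap)
  does too.  Because p 2 is adjacent to k, comparing a later entry with k is the same as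
  comparing it with p 2, so the drops of p are the drops of bar p shifted by one, plus
  position 2 when p 2 = k - 1.  Shifting adds card (drops (bar p)) = (bar p) 1 - 1 to the
  sum, whence dr p = dr (bar p) + k, resp. dr p = dr (bar p) + k - 1.
*)
theory Submission
  imports Defs
begin

definition close_gap :: "nat \<Rightarrow> nat \<Rightarrow> nat" where
  "close_gap k v = (if v < k then v else v - 1)"

definition open_gap :: "nat \<Rightarrow> nat \<Rightarrow> nat" where
  "open_gap k v = (if v < k then v else v + 1)"

lemma close_gap_less_iff: "u \<noteq> k \<Longrightarrow> v \<noteq> k \<Longrightarrow> close_gap k u < close_gap k v \<longleftrightarrow> u < v"
  unfolding close_gap_def by auto

lemma open_gap_less_iff: "open_gap k u < open_gap k v \<longleftrightarrow> u < v"
  unfolding open_gap_def by auto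

lemma close_gap_open_gap [simp]: "close_gap k (open_gap k v) = v"
  unfolding open_gap_def close_gap_def by auto

lemma open_gap_close_gap: "v \<noteq> k \<Longrightarrow> open_gap k (close_gap k v) = v"
  unfolding open_gap_def close_gap_def by auto

lemma bij_betw_close_gap:
  assumes "k \<in> {1..n}"
  shows "bij_betw (close_gap k) ({1..n} - {k}) {1..n-1}"
  by (rule bij_betw_byWitness[where f' = "open_gap k"])
    (use assms in \<open>auto simp: close_gap_def open_gap_def\<close>)

lemma bij_betw_open_gap:
  assumes "k \<in> {1..n}"
  shows "bij_betw (open_gap k) {1..n-1} ({1..n} - {k})"
  by (rule bij_betw_byWitness[where f' = "close_gap k"])
    (use assms in \<open>auto simp: close_gap_def open_gap_def\<close>)

lemma permutes_neq_first:
  "p permutes S \<Longrightarrow> i \<noteq> 1 \<Longrightarrow> p i \<noteq> p 1"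
  by (simp add: permutes_inj inj_eq)

lemma monotone_perm_permutes: "monotone_perm n p \<Longrightarrow> p permutes {1..n}"
  by (simp add: monotone_perm_def)

lemma monotone_perm_iff:
  "monotone_perm n p \<longleftrightarrow>
     p permutes {1..n} \<and> (\<forall>i\<in>{1..n}. \<forall>j\<in>{1..<i}. p j < p i \<longleftrightarrow> p 1 < p i)"
proof -
  have "(\<forall>j\<in>{1..<i}. p j < p i) \<or> (\<forall>j\<in>{1..<i}. p j > p i) \<longleftrightarrow>
        (\<forall>j\<in>{1..<i}. p j < p i \<longleftrightarrow> p 1 < p i)"
    if pp: "p permutes {1..n}" and i: "i \<in> {1..n}" for i
  proof (cases "i = 1")
    case True
    then show ?thesis by simp
  next
    case False
    then have first: "1 \<in> {1..<i}" using i by simp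
    have neq: "p j \<noteq> p i" if "j \<in> {1..<i}" for j
      using permutes_inj[OF pp] that by (simp add: inj_eq)
    show ?thesis
    proof
      assume "(\<forall>j\<in>{1..<i}. p j < p i) \<or> (\<forall>j\<in>{1..<i}. p j > p i)"
      then show "\<forall>j\<in>{1..<i}. p j < p i \<longleftrightarrow> p 1 < p i"
        using first by (blast dest: order.asym)
    next
      assume "\<forall>j\<in>{1..<i}. p j < p i \<longleftrightarrow> p 1 < p i"
      then show "(\<forall>j\<in>{1..<i}. p j < p i) \<or> (\<forall>j\<in>{1..<i}. p j > p i)"
        using neq by (meson linorder_neqE_nat)
    qed
  qed
  then show ?thesis unfolding monotone_perm_def by blast
qed

lemma monotone_perm_less_iff:
  assumes "monotone_perm n p" "1 \<le> j" "j < i" "i \<le> n"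
  shows "p j < p i \<longleftrightarrow> p 1 < p i"
proof -
  have "i \<in> {1..n}" "j \<in> {1..<i}" using assms(2-4) by auto
  then show ?thesis using assms(1) unfolding monotone_perm_iff by blast
qed

lemma drops_monotone_perm:
  assumes "monotone_perm n p"
  shows "drops n p = {i\<in>{1..n}. p i < p 1}"
proof -
  have pp: "p permutes {1..n}" using assms by (rule monotone_perm_permutes)
  have "(\<forall>j\<in>{1..<i}. p i < p j) \<longleftrightarrow> p i < p 1" if i: "i \<in> {2..n}" for i
  proof
    assume "\<forall>j\<in>{1..<i}. p i < p j"
    then show "p i < p 1" using i by simp
  next
    assume below: "p i < p 1"
    show "\<forall>j\<in>{1..<i}. p i < p j"
    proof
      fix j assume j: "j \<in> {1..<i}"
      then have "p j \<noteq> p i" using permutes_inj[OF pp] by (simp add: inj_eq)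
      moreover have "\<not> p j < p i"
        using monotone_perm_less_iff[OF assms, of j i] i j below by simp
      ultimately show "p i < p j" by simp
    qed
  qed
  moreover have "i \<in> {2..n} \<longleftrightarrow> i \<in> {1..n} \<and> i \<noteq> 1" for i :: nat
    by auto
  ultimately show ?thesis
    unfolding drops_def by blast
qed

lemma card_drops_monotone_perm:
  assumes "monotone_perm n p" "n \<ge> 1"
  shows "card (drops n p) = p 1 - 1"
proof -
  have pp: "p permutes {1..n}" using assms(1) by (rule monotone_perm_permutes)
  have p1: "p 1 \<in> {1..n}" using permutes_in_image[OF pp, of 1] assms(2) by simp
  have "p ` {i\<in>{1..n}. p i < p 1} = {v\<in>p ` {1..n}. v < p 1}" by blast
  also have "\<dots> = {1..<p 1}" unfolding permutes_image[OF pp] using p1 by auto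
  finally have "bij_betw p {i\<in>{1..n}. p i < p 1} {1..<p 1}"
    using permutes_inj_on[OF pp] by (simp add: bij_betw_def)
  then show ?thesis
    unfolding drops_monotone_perm[OF assms(1)] by (simp add: bij_betw_same_card)
qed

lemma sum_Suc_image: "finite A \<Longrightarrow> \<Sum>(Suc ` A) = \<Sum>A + card A"
  by (simp add: sum.reindex, induct A rule: finite_induct, auto)

definition delete_first :: "nat \<Rightarrow> (nat \<Rightarrow> nat) \<Rightarrow> nat \<Rightarrow> nat" where
  "delete_first n p = (\<lambda>i. if i \<in> {1..n-1} then close_gap (p 1) (p (i + 1)) else i)"

definition insert_first :: "nat \<Rightarrow> nat \<Rightarrow> (nat \<Rightarrow> nat) \<Rightarrow> nat \<Rightarrow> nat" where
  "insert_first n k s =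
     (\<lambda>i. if i = 1 then k else if i \<in> {2..n} then open_gap k (s (i - 1)) else i)"

(* Not [simp]: the simp rule One_nat_def turns the argument 1 into Suc 0 first. *)
lemma insert_first_1: "insert_first n k s 1 = k"
  by (simp add: insert_first_def)

lemma delete_first_permutes:
  assumes pp: "p permutes {1..n}" and n: "n \<ge> 1"
  shows "delete_first n p permutes {1..n-1}"
proof (rule bij_imp_permutes)
  have p1: "p 1 \<in> {1..n}" using permutes_in_image[OF pp, of 1] n by simp
  have "bij_betw p ({1..n} - {1}) ({1..n} - {p 1})"
    by (rule bij_betw_DiffI[OF permutes_imp_bij[OF pp]]) (use n p1 in auto)
  moreover have "{1..n} - {1} = {2..n}" by auto
  ultimately have "bij_betw p {2..n} ({1..n} - {p 1})" by simp
  moreover have "bij_betw Suc {1..n-1} {2..n}" using n by simp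
  moreover have "bij_betw (close_gap (p 1)) ({1..n} - {p 1}) {1..n-1}"
    using p1 by (rule bij_betw_close_gap)
  ultimately have "bij_betw (close_gap (p 1) \<circ> p \<circ> Suc) {1..n-1} {1..n-1}"
    by (metis bij_betw_trans comp_assoc)
  then show "bij_betw (delete_first n p) {1..n-1} {1..n-1}"
    by (rule bij_betw_cong[THEN iffD1, rotated]) (simp add: delete_first_def)
  show "delete_first n p i = i" if "i \<notin> {1..n-1}" for i
    using that unfolding delete_first_def by auto
qed

lemma insert_first_permutes:
  assumes sp: "s permutes {1..n-1}" and k: "k \<in> {1..n}"
  shows "insert_first n k s permutes {1..n}"
proof (rule bij_imp_permutes)
  have "bij_betw (\<lambda>i. i - 1) {2..n} {1..n-1}"
    by (rule bij_betw_byWitness[where f' = Suc]) auto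
  moreover have "bij_betw s {1..n-1} {1..n-1}" using sp by (rule permutes_imp_bij)
  moreover have "bij_betw (open_gap k) {1..n-1} ({1..n} - {k})"
    using k by (rule bij_betw_open_gap)
  ultimately have "bij_betw (open_gap k \<circ> s \<circ> (\<lambda>i. i - 1)) {2..n} ({1..n} - {k})"
    by (metis bij_betw_trans comp_assoc)
  then have "bij_betw (insert_first n k s) {2..n} ({1..n} - {k})"
    by (rule bij_betw_cong[THEN iffD1, rotated]) (simp add: insert_first_def)
  then have "bij_betw (insert_first n k s) ({2..n} \<union> {1}) (({1..n} - {k}) \<union> {k})"
    using notIn_Un_bij_betw3[of 1 "{2..n}" "insert_first n k s"] by (simp add: insert_first_def)
  moreover have "{2..n} \<union> {1} = {1..n}" "({1..n} - {k}) \<union> {k} = {1..n}"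
    using k by auto
  ultimately show "bij_betw (insert_first n k s) {1..n} {1..n}" by simp
  show "insert_first n k s i = i" if "i \<notin> {1..n}" for i
    using that k unfolding insert_first_def by auto
qed

lemma monotone_perm_delete_first:
  assumes mono: "monotone_perm n p" and n: "n \<ge> 1"
  shows "monotone_perm (n-1) (delete_first n p)"
  unfolding monotone_perm_iff
proof (intro conjI ballI)
  have pp: "p permutes {1..n}" using mono by (rule monotone_perm_permutes)
  then show "delete_first n p permutes {1..n-1}" using n by (rule delete_first_permutes)
  let ?q = "delete_first n p"
  fix i j assume i: "i \<in> {1..n-1}" and j: "j \<in> {1..<i}"
  have q: "?q m = close_gap (p 1) (p (m + 1))" if "m \<in> {1..n-1}" for m
    using that by (simp add: delete_first_def)
  have ij: "1 \<le> j" "j < i" "i + 1 \<le> n" using i j by auto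
  have "?q j < ?q i \<longleftrightarrow> p (j + 1) < p (i + 1)"
    using q i j close_gap_less_iff permutes_neq_first[OF pp] by simp
  also have "\<dots> \<longleftrightarrow> p 1 < p (i + 1)"
    using monotone_perm_less_iff[OF mono, of "j + 1" "i + 1"] ij by simp
  also have "\<dots> \<longleftrightarrow> p 2 < p (i + 1)"
    using monotone_perm_less_iff[OF mono, of 2 "i + 1"] ij by simp
  also have "\<dots> \<longleftrightarrow> ?q 1 < ?q i"
    using q[of 1] q i ij close_gap_less_iff permutes_neq_first[OF pp] by (simp add: numeral_2_eq_2)
  finally show "?q j < ?q i \<longleftrightarrow> ?q 1 < ?q i" .
qed

lemma monotone_perm_insert_first:
  assumes mono: "monotone_perm (n-1) s" and k: "k \<in> {1..n}"
    and adjacent: "s 1 \<le> k" "k \<le> s 1 + 1"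
  shows "monotone_perm n (insert_first n k s)"
  unfolding monotone_perm_iff
proof (intro conjI ballI)
  have sp: "s permutes {1..n-1}" using mono by (rule monotone_perm_permutes)
  then show "insert_first n k s permutes {1..n}" using k by (rule insert_first_permutes)
  let ?r = "insert_first n k s"
  fix i j assume i: "i \<in> {1..n}" and j: "j \<in> {1..<i}"
  have r: "?r m = open_gap k (s (m - 1))" if "m \<in> {2..n}" for m
    using that by (simp add: insert_first_def)
  show "?r j < ?r i \<longleftrightarrow> ?r 1 < ?r i"
  proof (cases "j = 1")
    case True
    then show ?thesis by simp
  next
    case False
    then have ij: "2 \<le> j" "j < i" "i \<le> n" using i j by auto
    have "s (i - 1) \<noteq> s 1" using permutes_neq_first[OF sp, of "i - 1"] ij by simp
    have "?r j < ?r i \<longleftrightarrow> s (j - 1) < s (i - 1)"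
      using r ij open_gap_less_iff by simp
    also have "\<dots> \<longleftrightarrow> s 1 < s (i - 1)"
      using monotone_perm_less_iff[OF mono, of "j - 1" "i - 1"] ij by simp
    also have "\<dots> \<longleftrightarrow> k \<le> s (i - 1)"
      using adjacent \<open>s (i - 1) \<noteq> s 1\<close> by auto
    also have "\<dots> \<longleftrightarrow> ?r 1 < ?r i"
      using r ij by (simp add: insert_first_def open_gap_def)
    finally show ?thesis .
  qed
qed

lemma insert_first_delete_first:
  assumes pp: "p permutes {1..n}"
  shows "insert_first n (p 1) (delete_first n p) = p"
proof
  fix i
  show "insert_first n (p 1) (delete_first n p) i = p i"
  proof (cases "i \<in> {2..n}")
    case True
    then have "delete_first n p (i - 1) = close_gap (p 1) (p i)"
      by (auto simp: delete_first_def)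
    then show ?thesis
      using True permutes_neq_first[OF pp, of i] by (simp add: insert_first_def open_gap_close_gap)
  next
    case False
    then show ?thesis using permutes_not_in[OF pp, of i] by (auto simp: insert_first_def)
  qed
qed

lemma delete_first_insert_first:
  assumes sp: "s permutes {1..n-1}"
  shows "delete_first n (insert_first n k s) = s"
proof
  fix i
  show "delete_first n (insert_first n k s) i = s i"
  proof (cases "i \<in> {1..n-1}")
    case True
    then have "delete_first n (insert_first n k s) i =
        close_gap (insert_first n k s 1) (insert_first n k s (i + 1))"
      by (simp add: delete_first_def)
    also have "\<dots> = close_gap k (open_gap k (s i))"
      using True by (auto simp: insert_first_def)
    finally show ?thesis using insert_first_1 by simp
  next
    case False
    then show ?thesis using permutes_not_in[OF sp, of i] unfolding delete_first_def by auto
  qed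
qed

lemma delete_first_in_Mon:
  assumes p: "p \<in> Mon2 n k l" and n: "n \<ge> 2"
  shows "delete_first n p \<in> Mon (n-1) (close_gap k l)"
proof -
  have "monotone_perm n p" "p 1 = k" "p 2 = l" using p by (auto simp: Mon2_def)
  moreover have "delete_first n p 1 = close_gap (p 1) (p 2)"
    using n by (auto simp: delete_first_def numeral_2_eq_2)
  ultimately show ?thesis
    using monotone_perm_delete_first n by (simp add: Mon_def)
qed

lemma insert_first_in_Mon2:
  assumes s: "s \<in> Mon (n-1) (close_gap k l)" and n: "n \<ge> 2" and k: "k \<in> {1..n}"
    and adjacent: "l + 1 = k \<or> l = k + 1"
  shows "insert_first n k s \<in> Mon2 n k l"
proof -
  have mono: "monotone_perm (n-1) s" and s1: "s 1 = close_gap k l"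
    using s by (auto simp: Mon_def)
  have "s 1 \<le> k" "k \<le> s 1 + 1" using s1 adjacent by (auto simp: close_gap_def)
  then have "monotone_perm n (insert_first n k s)"
    using monotone_perm_insert_first[OF mono k] by simp
  moreover have "insert_first n k s 2 = open_gap k (close_gap k l)"
    using n s1 by (simp add: insert_first_def)
  moreover have "l \<noteq> k" using adjacent by auto
  ultimately show ?thesis using insert_first_1 unfolding Mon2_def by (simp add: open_gap_close_gap)
qed

lemma bij_betw_delete_first:
  assumes n: "n \<ge> 2" and k: "k \<in> {1..n}" and adjacent: "l + 1 = k \<or> l = k + 1"
  shows "bij_betw (delete_first n) (Mon2 n k l) (Mon (n-1) (close_gap k l))"
proof (rule bij_betw_byWitness[where f' = "insert_first n k"])
  show "\<forall>p\<in>Mon2 n k l. insert_first n k (delete_first n p) = p"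
    using insert_first_delete_first by (auto simp: Mon2_def monotone_perm_def)
  show "\<forall>s\<in>Mon (n-1) (close_gap k l). delete_first n (insert_first n k s) = s"
    using delete_first_insert_first by (auto simp: Mon_def monotone_perm_def)
  show "delete_first n ` Mon2 n k l \<subseteq> Mon (n-1) (close_gap k l)"
    using delete_first_in_Mon n by blast
  show "insert_first n k ` Mon (n-1) (close_gap k l) \<subseteq> Mon2 n k l"
    using insert_first_in_Mon2 n k adjacent by blast
qed

lemma drops_delete_first:
  assumes p: "p \<in> Mon2 n k l" and n: "n \<ge> 2" and adjacent: "l + 1 = k \<or> l = k + 1"
  shows "drops n p = (if l < k then {2} else {}) \<union> Suc ` drops (n-1) (delete_first n p)"
proof -
  let ?q = "delete_first n p"
  have mono: "monotone_perm n p" and p1: "p 1 = k" and p2: "p 2 = l"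
    using p by (auto simp: Mon2_def)
  have pp: "p permutes {1..n}" using mono by (rule monotone_perm_permutes)
  have "?q \<in> Mon (n-1) (close_gap k l)" using p n by (rule delete_first_in_Mon)
  then have q_mono: "monotone_perm (n-1) ?q" and q1: "?q 1 = close_gap k l"
    by (auto simp: Mon_def)
  have shifted: "x \<in> Suc ` drops (n-1) ?q \<longleftrightarrow> x \<in> {2..n} \<and> p x < l" for x
  proof -
    have "x \<in> Suc ` drops (n-1) ?q \<longleftrightarrow> x \<in> {2..n} \<and> ?q (x - 1) < ?q 1"
      unfolding drops_monotone_perm[OF q_mono] by (cases x) auto
    moreover have "?q (x - 1) < ?q 1 \<longleftrightarrow> p x < l" if "x \<in> {2..n}"
    proof -
      have "?q (x - 1) = close_gap k (p x)" using that p1 by (auto simp: delete_first_def)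
      moreover have "p x \<noteq> k" using permutes_neq_first[OF pp, of x] that p1 by auto
      moreover have "l \<noteq> k" using adjacent by auto
      ultimately show ?thesis using q1 close_gap_less_iff by simp
    qed
    ultimately show ?thesis by blast
  qed
  have "x \<in> drops n p \<longleftrightarrow> x \<in> {2..n} \<and> p x < k" for x
    unfolding drops_monotone_perm[OF mono] using p1 by (cases "x = 1") auto
  moreover have "p x < k \<longleftrightarrow> (x = 2 \<and> l < k) \<or> p x < l" if "x \<in> {2..n}" for x
  proof (cases "x = 2")
    case True
    then show ?thesis using p2 by auto
  next
    case False
    have "p x \<noteq> k" using permutes_neq_first[OF pp, of x] that p1 by auto
    moreover have "p x \<noteq> l" using permutes_inj[OF pp] False p2 by (auto simp: inj_eq)
    ultimately show ?thesis using False adjacent by auto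
  qed
  ultimately show ?thesis using shifted n by auto
qed

lemma dr_delete_first:
  assumes p: "p \<in> Mon2 n k l" and n: "n \<ge> 2" and adjacent: "l + 1 = k \<or> l = k + 1"
  shows "dr n p = dr (n-1) (delete_first n p) + (if l < k then k else k - 1)"
proof -
  let ?D = "drops (n-1) (delete_first n p)"
  have "delete_first n p \<in> Mon (n-1) (close_gap k l)" using p n by (rule delete_first_in_Mon)
  then have "card ?D = close_gap k l - 1"
    using card_drops_monotone_perm n by (auto simp: Mon_def)
  moreover have "finite ?D" "2 \<notin> Suc ` ?D" by (auto simp: drops_def)
  moreover have "l \<ge> 1"
    using p n permutes_in_image[of p "{1..n}" 2] by (auto simp: Mon2_def monotone_perm_def)
  ultimately show ?thesis
    using drops_delete_first[OF p n adjacent] sum_Suc_image adjacent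
    by (auto simp: dr_def close_gap_def)
qed

lemma bar_eq_delete_first:
  assumes "p \<in> Mon2 n k l" and "n \<ge> 2"
  shows "bar n k (close_gap k l) p = delete_first n p"
proof
  fix i
  show "bar n k (close_gap k l) p i = delete_first n p i"
    using assms by (auto simp: bar_def delete_first_def Mon2_def close_gap_def numeral_2_eq_2)
qed

lemma bij_betw_bar:
  assumes n: "n \<ge> 2" and k: "k \<in> {1..n}" and adjacent: "l + 1 = k \<or> l = k + 1"
  shows "bij_betw (bar n k (close_gap k l)) (Mon2 n k l) (Mon (n-1) (close_gap k l))"
  using bij_betw_delete_first[OF n k adjacent] bar_eq_delete_first[OF _ n]
  by (simp cong: bij_betw_cong)

lemma dr_bar:
  assumes "p \<in> Mon2 n k l" and "n \<ge> 2" and "l + 1 = k \<or> l = k + 1"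
  shows "dr n p = dr (n-1) (bar n k (close_gap k l) p) + (if l < k then k else k - 1)"
  using dr_delete_first[OF assms] bar_eq_delete_first[OF assms(1,2)] by simp

theorem lemma2p6:
  fixes n k :: nat
  assumes "n \<ge> 2" and "1 \<le> k" and "k \<le> n"
  shows "bij_betw (bar n k (k - 1)) (Mon2 n k (k - 1)) (Mon (n - 1) (k - 1))
       \<and> (\<forall>p\<in>Mon2 n k (k - 1).
            (-1::int) ^ dr (n - 1) (bar n k (k - 1) p) = (-1) ^ (dr n p + k))
       \<and> bij_betw (bar n k k) (Mon2 n k (k + 1)) (Mon (n - 1) k)
       \<and> (\<forall>p\<in>Mon2 n k (k + 1).
            (-1::int) ^ dr (n - 1) (bar n k k p) = (-1) ^ (dr n p + k - 1))"
proof -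
  have k: "k \<in> {1..n}" using assms by simp
  have below: "k - 1 + 1 = k" using assms by simp
  have gap_below: "close_gap k (k - 1) = k - 1" and gap_above: "close_gap k (k + 1) = k"
    using assms by (simp_all add: close_gap_def)
  have "dr n p + k = dr (n - 1) (bar n k (k - 1) p) + 2 * k" if "p \<in> Mon2 n k (k - 1)" for p
    using dr_bar[OF that assms(1)] below gap_below assms(2) by simp
  moreover have "dr n p + k - 1 = dr (n - 1) (bar n k k p) + 2 * (k - 1)"
    if "p \<in> Mon2 n k (k + 1)" for p
    using dr_bar[OF that assms(1)] gap_above assms(2) by simp
  ultimately show ?thesis
    using bij_betw_bar[OF assms(1) k, of "k - 1"] bij_betw_bar[OF assms(1) k, of "k + 1"]
      below gap_below gap_above
    by (simp add: power_add power_mult)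
qed

end
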